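(* Let $\mathcal X=[0,1]^t$ with $d(x,y)=\|x-y\|_\infty$, let $\mathcal C=[1/4,3/4]^t$, and let $0<\epsilon<1/64$. Suppose that for some integer $k\ge1$ there is a panel decision function $\widetilde q:\mathcal X^k\to\mathcal C$ such that for every facility location instance $\langle\mathcal X,\mathcal C,d,(x_1,\dots,x_n)\rangle$ (with $n\ge k$), $$\mathbb E_{S\sim\mathcal U_{k,n}}\big[\textsc{Social-Cost}(\widetilde q(S))\big]\le(1+\epsilon)\cdot\textsc{Social-Opt}.$$ Then $k\ge c\,t/\epsilon^2$ for an absolute constant $c>0$ (i.e., $k=\Omega((1/\epsilon)^2 t)$).
   Context: For agent locations $x_1,\dots,x_n\in\mathcal X$, $\textsc{Social-Cost}(q)=\frac1n\sum_{i=1}^n d(q,x_i)$ and $\textsc{Social-Opt}=\min_{q\in\mathcal C}\textsc{Social-Cost}(q)$. For a panel $S\subseteq[n]$ of size $k$, $\widetilde q(S)$ denotes $\widetilde q$ applied to the locations $(x_i)_{i\in S}$. $\mathcal U_{k,n}$ is the uniform distribution over size-$k$ subsets of $[n]$. *)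

theory Defs
  imports "HOL-Probability.Probability"
begin

text \<open>Points of R^t are represented as functions nat => real that vanish at
coordinates >= t (t varies inside the statement).\<close>

definition cube :: "nat \<Rightarrow> real \<Rightarrow> real \<Rightarrow> (nat \<Rightarrow> real) set" where
  "cube t a b = {x. (\<forall>i<t. a \<le> x i \<and> x i \<le> b) \<and> (\<forall>i\<ge>t. x i = 0)}"

abbreviation X_space :: "nat \<Rightarrow> (nat \<Rightarrow> real) set" where
  "X_space t \<equiv> cube t 0 1"

abbreviation C_space :: "nat \<Rightarrow> (nat \<Rightarrow> real) set" where
  "C_space t \<equiv> cube t (1/4) (3/4)"

definition linf_dist :: "nat \<Rightarrow> (nat \<Rightarrow> real) \<Rightarrow> (nat \<Rightarrow> real) \<Rightarrow> real" where
  "linf_dist t x y = Max ((\<lambda>i. \<bar>x i - y i\<bar>) ` {..<t})"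

definition social_cost :: "nat \<Rightarrow> nat \<Rightarrow> (nat \<Rightarrow> nat \<Rightarrow> real) \<Rightarrow> (nat \<Rightarrow> real) \<Rightarrow> real" where
  "social_cost t n x q = (1 / real n) * (\<Sum>i<n. linf_dist t q (x i))"

definition social_opt :: "nat \<Rightarrow> nat \<Rightarrow> (nat \<Rightarrow> nat \<Rightarrow> real) \<Rightarrow> real" where
  "social_opt t n x = (INF q\<in>C_space t. social_cost t n x q)"

definition uniform_panels :: "nat \<Rightarrow> nat \<Rightarrow> nat set pmf" where
  "uniform_panels k n = pmf_of_set {S. S \<subseteq> {..<n} \<and> card S = k}"

definition panel_apply :: "((nat \<Rightarrow> real) list \<Rightarrow> (nat \<Rightarrow> real)) \<Rightarrow> (nat \<Rightarrow> nat \<Rightarrow> real) \<Rightarrow> nat set \<Rightarrow> (nat \<Rightarrow> real)" where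
  "panel_apply q x S = q (map x (sorted_list_of_set S))"

end

theory Submission
  imports Defs
begin

(* Assouad's method. Fix a sign vector sigma in {0,1}^t and delta = 32 eps, and let the agents be
   i.i.d. facet centres of the unit cube: a uniformly random coordinate j is set to 1 with
   probability (1 + delta)/2 or (1 - delta)/2 according to sigma j, and to 0 otherwise, while all
   other coordinates are 1/2. For Q in [1/4,3/4]^t the expected l-infinity distance to such an
   agent is 1/2 - delta/4 + (delta/t) * sum_j excess_j(Q), where excess_j(Q) is the distance of
   Q_j from the corner value (3/4 or 1/4) selected by sigma j. Agents outside the panel are
   independent of the panel's decision, so with n >> k agents the approximation guarantee forces
   the average excess of the decision below t/32. On the other hand, flipping one sign
   changes the law of a single agent only slightly (Bhattacharyya coefficient at least
   1 - delta^2/t), so while k delta^2/t <= 1/2 the laws of the k panel members under sigma and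
   under the flipped sigma overlap by at least 1/8; by Le Cam's two-point argument no decision
   has small excess on coordinate j for both signs, and averaging over all sigma yields a sigma
   with average excess at least t/32. The two bounds are incompatible unless
   k >= t / (2048 eps^2). *)

lemma finite_set_Pi_pmf:
  assumes "finite A" "\<And>x. x \<in> A \<Longrightarrow> finite (set_pmf (p x))"
  shows "finite (set_pmf (Pi_pmf A dflt p))"
  using assms by (auto simp: set_Pi_pmf)

lemma expectation_pair_pmf:
  fixes h :: "'a \<times> 'b \<Rightarrow> real"
  assumes "finite (set_pmf A)" "finite (set_pmf B)"
  shows "measure_pmf.expectation (pair_pmf A B) h =
         measure_pmf.expectation B (\<lambda>b. measure_pmf.expectation A (\<lambda>a. h (a, b)))"
proof -
  have "measure_pmf.expectation (pair_pmf A B) h =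
        (\<Sum>z\<in>set_pmf A \<times> set_pmf B. h z * pmf (pair_pmf A B) z)"
    using assms by (intro integral_measure_pmf_real) auto
  also have "\<dots> = (\<Sum>a\<in>set_pmf A. \<Sum>b\<in>set_pmf B. h (a, b) * pmf A a * pmf B b)"
    unfolding sum.cartesian_product by (intro sum.cong) (auto simp: pmf_pair mult.assoc)
  also have "\<dots> = (\<Sum>b\<in>set_pmf B. (\<Sum>a\<in>set_pmf A. h (a, b) * pmf A a) * pmf B b)"
    by (subst sum.swap) (simp add: sum_distrib_right)
  also have "\<dots> = measure_pmf.expectation B (\<lambda>b. measure_pmf.expectation A (\<lambda>a. h (a, b)))"
    using assms by (simp add: integral_measure_pmf_real[of "set_pmf A"]
                              integral_measure_pmf_real[of "set_pmf B"])
  finally show ?thesis .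
qed

lemma expectation_Pi_pmf_fresh_component:
  fixes h :: "'c \<Rightarrow> 'b \<Rightarrow> real"
  assumes "finite I" "S \<subseteq> I" "i \<in> I - S" "finite (set_pmf p)"
    and depends_on_S: "\<And>f f'. (\<forall>l\<in>S. f l = f' l) \<Longrightarrow> g f = g f'"
  shows "measure_pmf.expectation (Pi_pmf I d (\<lambda>_. p)) (\<lambda>f. h (g f) (f i)) =
         measure_pmf.expectation (Pi_pmf S d (\<lambda>_. p))
           (\<lambda>f. measure_pmf.expectation p (\<lambda>y. h (g f) y))"
proof -
  have finS: "finite S" using assms finite_subset by blast
  let ?restrict = "\<lambda>f l. if l \<in> insert i S then f l else d"
  have "measure_pmf.expectation (Pi_pmf I d (\<lambda>_. p)) (\<lambda>f. h (g f) (f i)) =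
        measure_pmf.expectation (map_pmf ?restrict (Pi_pmf I d (\<lambda>_. p))) (\<lambda>f. h (g f) (f i))"
  proof -
    have "g (?restrict f) = g f" for f by (rule depends_on_S) auto
    then show ?thesis by simp
  qed
  also have "map_pmf ?restrict (Pi_pmf I d (\<lambda>_. p)) = Pi_pmf (insert i S) d (\<lambda>_. p)"
    using assms by (intro Pi_pmf_subset[symmetric]) auto
  also have "\<dots> = map_pmf (\<lambda>(y, f). f(i := y)) (pair_pmf p (Pi_pmf S d (\<lambda>_. p)))"
    using assms finS by (intro Pi_pmf_insert) auto
  also have "measure_pmf.expectation \<dots> (\<lambda>f. h (g f) (f i)) =
             measure_pmf.expectation (pair_pmf p (Pi_pmf S d (\<lambda>_. p))) (\<lambda>(y, f). h (g f) y)"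
  proof -
    have "g (f(i := y)) = g f" for f y using assms(3) by (intro depends_on_S) auto
    then show ?thesis by (simp add: case_prod_unfold)
  qed
  also have "\<dots> = measure_pmf.expectation (Pi_pmf S d (\<lambda>_. p))
                    (\<lambda>f. measure_pmf.expectation p (\<lambda>y. h (g f) y))"
    using assms(4) finS by (subst expectation_pair_pmf) (auto intro: finite_set_Pi_pmf)
  finally show ?thesis .
qed

definition bhattacharyya :: "'a set \<Rightarrow> 'a pmf \<Rightarrow> 'a pmf \<Rightarrow> real" where
  "bhattacharyya B p p' = (\<Sum>y\<in>B. sqrt (pmf p y * pmf p' y))"

definition pmf_overlap :: "'a set \<Rightarrow> 'a pmf \<Rightarrow> 'a pmf \<Rightarrow> real" where
  "pmf_overlap B p p' = (\<Sum>y\<in>B. min (pmf p y) (pmf p' y))"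

lemma real_sqrt_prod: "sqrt (\<Prod>i\<in>S. a i) = (\<Prod>i\<in>S. sqrt (a i))"
  by (induction S rule: infinite_finite_induct) (auto simp: real_sqrt_mult)

lemma sum_pmf_le_1: "finite B \<Longrightarrow> (\<Sum>y\<in>B. pmf p y) \<le> 1"
  by (simp add: measure_measure_pmf_finite[symmetric])

lemma bhattacharyya_sq_le_overlap:
  assumes "finite B"
  shows "(bhattacharyya B p p')\<^sup>2 \<le> 2 * pmf_overlap B p p'"
proof -
  let ?lo = "\<lambda>y. min (pmf p y) (pmf p' y)" and ?hi = "\<lambda>y. max (pmf p y) (pmf p' y)"
  have split: "sqrt (pmf p y * pmf p' y) = sqrt (?lo y) * sqrt (?hi y)" for y
    by (simp add: real_sqrt_mult[symmetric] min_def max_def mult.commute)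
  have "(bhattacharyya B p p')\<^sup>2 \<le> (\<Sum>y\<in>B. (sqrt (?lo y))\<^sup>2) * (\<Sum>y\<in>B. (sqrt (?hi y))\<^sup>2)"
    unfolding bhattacharyya_def split by (rule Cauchy_Schwarz_ineq_sum)
  also have "\<dots> = pmf_overlap B p p' * (\<Sum>y\<in>B. ?hi y)"
    by (simp add: pmf_overlap_def le_max_iff_disj)
  also have "\<dots> \<le> pmf_overlap B p p' * 2"
  proof (rule mult_left_mono)
    have "(\<Sum>y\<in>B. ?hi y) \<le> (\<Sum>y\<in>B. pmf p y) + (\<Sum>y\<in>B. pmf p' y)"
      by (simp add: sum.distrib[symmetric] sum_mono)
    then show "(\<Sum>y\<in>B. ?hi y) \<le> 2"
      using sum_pmf_le_1[OF assms, of p] sum_pmf_le_1[OF assms, of p'] by linarith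
  qed (simp add: pmf_overlap_def sum_nonneg)
  finally show ?thesis by simp
qed

lemma bhattacharyya_Pi_pmf:
  assumes "finite S" "finite B" "set_pmf p \<subseteq> B" "set_pmf p' \<subseteq> B"
  shows "bhattacharyya (PiE_dflt S d (\<lambda>_. B)) (Pi_pmf S d (\<lambda>_. p)) (Pi_pmf S d (\<lambda>_. p')) =
         bhattacharyya B p p' ^ card S"
proof -
  (* Writing sqrt (p y * p' y) as p y * ratio y turns the sum over the product space into an
     expectation of a product of independent factors. *)
  define ratio where "ratio = (\<lambda>y. sqrt (pmf p' y / pmf p y))"
  have sqrt_mult_eq_ratio: "sqrt (a * b) = a * sqrt (b / a)" if "0 \<le> a" for a b :: real
  proof (cases "a = 0")
    case False
    then have "sqrt (a * b) = sqrt ((a * a) * (b / a))" by simp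
    also have "\<dots> = a * sqrt (b / a)" using that by (simp only: real_sqrt_mult) simp
    finally show ?thesis .
  qed simp
  let ?F = "PiE_dflt S d (\<lambda>_. B)" and ?P = "Pi_pmf S d (\<lambda>_. p)" and ?P' = "Pi_pmf S d (\<lambda>_. p')"
  have "bhattacharyya ?F ?P ?P' = (\<Sum>f\<in>?F. (\<Prod>i\<in>S. ratio (f i)) * pmf ?P f)"
    unfolding bhattacharyya_def
  proof (rule sum.cong[OF refl])
    fix f assume "f \<in> ?F"
    then have "\<And>x. x \<notin> S \<Longrightarrow> f x = d" by (auto simp: PiE_dflt_def)
    then show "sqrt (pmf ?P f * pmf ?P' f) = (\<Prod>i\<in>S. ratio (f i)) * pmf ?P f"
      using assms(1)
      by (simp add: pmf_Pi' prod.distrib[symmetric] real_sqrt_prod sqrt_mult_eq_ratio ratio_def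
                    mult.commute)
  qed
  also have "\<dots> = measure_pmf.expectation ?P (\<lambda>f. \<Prod>i\<in>S. ratio (f i))"
    using assms set_Pi_pmf_subset'[OF assms(1), of d "\<lambda>_. p"]
    by (intro integral_measure_pmf_real[symmetric] finite_PiE_dflt) (auto simp: PiE_dflt_def)
  also have "\<dots> = measure_pmf.expectation p ratio ^ card S"
    using expectation_prod_Pi_pmf[OF assms(1), of "\<lambda>_. p" "\<lambda>_. ratio" d] assms
    by (auto simp: ratio_def integrable_measure_pmf_finite finite_subset)
  also have "measure_pmf.expectation p ratio = bhattacharyya B p p'"
    using assms unfolding bhattacharyya_def
    by (subst integral_measure_pmf_real[of B]) (auto simp: sqrt_mult_eq_ratio ratio_def mult.commute)
  finally show ?thesis .
qed

lemma le_cam_two_point: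
  fixes u v :: "'a \<Rightarrow> real"
  assumes "finite B" "set_pmf p \<subseteq> B" "set_pmf p' \<subseteq> B"
    and "\<And>y. 0 \<le> u y" "\<And>y. 0 \<le> v y" "\<And>y. c \<le> u y + v y"
  shows "c * pmf_overlap B p p' \<le> measure_pmf.expectation p u + measure_pmf.expectation p' v"
proof -
  have "c * min (pmf p y) (pmf p' y) \<le> u y * pmf p y + v y * pmf p' y" for y
  proof -
    have "c * min (pmf p y) (pmf p' y) \<le> (u y + v y) * min (pmf p y) (pmf p' y)"
      using assms(6) by (simp add: mult_right_mono)
    also have "\<dots> \<le> u y * pmf p y + v y * pmf p' y"
      using assms(4,5) by (simp add: distrib_right add_mono mult_left_mono)
    finally show ?thesis .
  qed
  then have "c * pmf_overlap B p p' \<le> (\<Sum>y\<in>B. u y * pmf p y) + (\<Sum>y\<in>B. v y * pmf p' y)"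
    unfolding pmf_overlap_def sum_distrib_left sum.distrib[symmetric] by (rule sum_mono)
  then show ?thesis
    using assms by (simp add: integral_measure_pmf_real[of B] subset_iff)
qed

definition coord_pmf :: "nat \<Rightarrow> (nat \<Rightarrow> real) \<Rightarrow> (nat \<times> bool) pmf" where
  "coord_pmf t r = pmf_of_set {..<t} \<bind> (\<lambda>j. map_pmf (Pair j) (bernoulli_pmf (r j)))"

lemma set_coord_pmf: "t \<ge> 1 \<Longrightarrow> set_pmf (coord_pmf t r) \<subseteq> {..<t} \<times> UNIV"
  by (auto simp: coord_pmf_def set_bind_pmf lessThan_empty_iff)

lemma finite_set_coord_pmf: "t \<ge> 1 \<Longrightarrow> finite (set_pmf (coord_pmf t r))"
  using set_coord_pmf by (rule finite_subset) auto

lemma pmf_coord_pmf: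
  assumes "t \<ge> 1" "0 \<le> r j" "r j \<le> 1"
  shows "pmf (coord_pmf t r) (j, b) = (if j < t then (if b then r j else 1 - r j) / t else 0)"
proof -
  have "pmf (map_pmf (Pair j') (bernoulli_pmf (r j'))) (j, b) =
        (if j' = j then pmf (bernoulli_pmf (r j)) b else 0)" for j'
    by (cases "j' = j") (auto simp: pmf_map_inj' inj_on_def pmf_eq_0_set_pmf)
  then have "pmf (coord_pmf t r) (j, b) = (if j < t then pmf (bernoulli_pmf (r j)) b / t else 0)"
    using assms(1) by (simp add: coord_pmf_def pmf_bind integral_pmf_of_set lessThan_empty_iff)
  then show ?thesis
    using assms(2,3) by (cases b) auto
qed

lemma expectation_coord_pmf:
  assumes "t \<ge> 1" "\<And>j. 0 \<le> r j" "\<And>j. r j \<le> 1"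
  shows "measure_pmf.expectation (coord_pmf t r) f =
         (\<Sum>j<t. r j * f (j, True) + (1 - r j) * f (j, False)) / t"
proof -
  have "measure_pmf.expectation (coord_pmf t r) f =
        (\<Sum>j<t. \<Sum>b\<in>UNIV. f (j, b) * pmf (coord_pmf t r) (j, b))"
    using set_coord_pmf[OF assms(1)]
    by (subst integral_measure_pmf_real[of "{..<t} \<times> UNIV"]) (auto simp: sum.cartesian_product)
  also have "\<dots> = (\<Sum>j<t. (r j * f (j, True) + (1 - r j) * f (j, False)) / t)"
    using assms by (intro sum.cong) (auto simp: pmf_coord_pmf UNIV_bool field_simps)
  finally show ?thesis
    by (simp add: sum_divide_distrib)
qed

definition facet_center :: "nat \<Rightarrow> nat \<times> bool \<Rightarrow> (nat \<Rightarrow> real)" where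
  "facet_center t = (\<lambda>(j, b) i. if i < t then if i = j then (if b then 1 else 0) else 1/2 else 0)"

lemma facet_center_in_cube: "facet_center t y \<in> X_space t"
  by (auto simp: cube_def facet_center_def split: prod.splits)

lemma linf_dist_nonneg: "t \<ge> 1 \<Longrightarrow> 0 \<le> linf_dist t a b"
  unfolding linf_dist_def by (rule order_trans[OF abs_ge_zero[of "a 0 - b 0"]]) (rule Max_ge, auto)

lemma linf_dist_facet_center:
  assumes "Q \<in> C_space t" "j < t"
  shows "linf_dist t Q (facet_center t (j, b)) = (if b then 1 - Q j else Q j)"
  unfolding linf_dist_def
proof (rule Max_eqI)
  have Q: "1/4 \<le> Q i" "Q i \<le> 3/4" if "i < t" for i
    using assms that by (auto simp: cube_def)
  show "y \<le> (if b then 1 - Q j else Q j)"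
    if y: "y \<in> (\<lambda>i. \<bar>Q i - facet_center t (j, b) i\<bar>) ` {..<t}" for y
  proof -
    obtain i where "i < t" "y = \<bar>Q i - facet_center t (j, b) i\<bar>" using y by blast
    then show ?thesis
      using Q[of i] Q[OF assms(2)] by (cases "i = j") (auto simp: facet_center_def)
  qed
  show "(if b then 1 - Q j else Q j) \<in> (\<lambda>i. \<bar>Q i - facet_center t (j, b) i\<bar>) ` {..<t}"
    using assms(2) Q[OF assms(2)] by (intro image_eqI[of _ _ j]) (auto simp: facet_center_def)
qed simp

definition sign_bias :: "real \<Rightarrow> (nat \<Rightarrow> bool) \<Rightarrow> nat \<Rightarrow> real" where
  "sign_bias \<delta> \<sigma> j = (if \<sigma> j then (1 + \<delta>) / 2 else (1 - \<delta>) / 2)"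

abbreviation sign_pmf :: "nat \<Rightarrow> real \<Rightarrow> (nat \<Rightarrow> bool) \<Rightarrow> (nat \<times> bool) pmf" where
  "sign_pmf t \<delta> \<sigma> \<equiv> coord_pmf t (sign_bias \<delta> \<sigma>)"

definition coord_excess :: "bool \<Rightarrow> real \<Rightarrow> real" where
  "coord_excess b v = (if b then 3/4 - v else v - 1/4)"

lemma expected_cost_sign_pmf:
  assumes "t \<ge> 1" "0 \<le> \<delta>" "\<delta> \<le> 1" "Q \<in> C_space t"
  shows "measure_pmf.expectation (sign_pmf t \<delta> \<sigma>) (\<lambda>y. linf_dist t Q (facet_center t y)) =
         (1/2 - \<delta>/4) + \<delta> / t * (\<Sum>j<t. coord_excess (\<sigma> j) (Q j))"
proof -
  have "measure_pmf.expectation (sign_pmf t \<delta> \<sigma>) (\<lambda>y. linf_dist t Q (facet_center t y)) =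
        (\<Sum>j<t. (1/2 - \<delta>/4) + \<delta> * coord_excess (\<sigma> j) (Q j)) / t"
    using assms
    by (subst expectation_coord_pmf)
       (auto intro!: arg_cong[where f="\<lambda>x. x / t"] sum.cong
             simp: sign_bias_def linf_dist_facet_center coord_excess_def field_simps)
  also have "\<dots> = (t * (1/2 - \<delta>/4) + \<delta> * (\<Sum>j<t. coord_excess (\<sigma> j) (Q j))) / t"
    by (simp add: sum.distrib sum_distrib_left)
  also have "\<dots> = (1/2 - \<delta>/4) + \<delta> / t * (\<Sum>j<t. coord_excess (\<sigma> j) (Q j))"
    using assms(1) by (simp add: field_simps)
  finally show ?thesis .
qed

definition sign_point :: "nat \<Rightarrow> (nat \<Rightarrow> bool) \<Rightarrow> (nat \<Rightarrow> real)" where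
  "sign_point t \<sigma> = (\<lambda>i. if i < t then if \<sigma> i then 3/4 else 1/4 else 0)"

lemma sign_point_in_cube: "sign_point t \<sigma> \<in> C_space t"
  by (auto simp: sign_point_def cube_def)

lemma expected_cost_sign_point:
  assumes "t \<ge> 1" "0 \<le> \<delta>" "\<delta> \<le> 1"
  shows "measure_pmf.expectation (sign_pmf t \<delta> \<sigma>)
           (\<lambda>y. linf_dist t (sign_point t \<sigma>) (facet_center t y)) = 1/2 - \<delta>/4"
proof -
  have "(\<Sum>j<t. coord_excess (\<sigma> j) (sign_point t \<sigma> j)) = 0"
    by (intro sum.neutral) (simp add: coord_excess_def sign_point_def)
  then show ?thesis
    using expected_cost_sign_pmf[OF assms sign_point_in_cube] by simp
qed

lemma bhattacharyya_sign_pmf_flip: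
  assumes "t \<ge> 1" "j < t" "0 \<le> \<delta>" "\<delta> \<le> 1"
  shows "1 - \<delta>\<^sup>2 / t \<le>
         bhattacharyya ({..<t} \<times> UNIV) (sign_pmf t \<delta> \<sigma>) (sign_pmf t \<delta> (\<sigma>(j := \<not> \<sigma> j)))"
proof -
  let ?p = "sign_pmf t \<delta> \<sigma>" and ?p' = "sign_pmf t \<delta> (\<sigma>(j := \<not> \<sigma> j))"
  have bias: "0 \<le> sign_bias \<delta> \<sigma>' i" "sign_bias \<delta> \<sigma>' i \<le> 1" for \<sigma>' i
    using assms by (auto simp: sign_bias_def)
  have per_coordinate: "(1 - (if i = j then \<delta>\<^sup>2 else 0)) / t \<le>
              (\<Sum>b\<in>UNIV. sqrt (pmf ?p (i, b) * pmf ?p' (i, b)))" if "i < t" for i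
  proof (cases "i = j")
    case True
    have nonneg: "0 \<le> 1 - \<delta>\<^sup>2" and le1: "1 - \<delta>\<^sup>2 \<le> 1"
      using assms by (simp_all add: power_le_one)
    then have "pmf ?p (i, b) * pmf ?p' (i, b) = (sqrt (1 - \<delta>\<^sup>2) / (2 * t))\<^sup>2" for b
      using assms True
      by (cases b; cases "\<sigma> j")
         (auto simp: pmf_coord_pmf bias sign_bias_def power_divide power2_eq_square field_simps)
    then have "(\<Sum>b\<in>UNIV. sqrt (pmf ?p (i, b) * pmf ?p' (i, b))) = sqrt (1 - \<delta>\<^sup>2) / t"
      using nonneg by (simp add: UNIV_bool)
    moreover have "1 - \<delta>\<^sup>2 \<le> sqrt (1 - \<delta>\<^sup>2)"
      using mult_left_le_one_le[OF nonneg nonneg le1] by (intro real_le_rsqrt) (simp add: power2_eq_square)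
    ultimately show ?thesis
      using True by (simp add: divide_right_mono)
  next
    case False
    then have "pmf ?p' (i, b) = pmf ?p (i, b)" for b
      using assms by (simp add: pmf_coord_pmf bias) (simp add: sign_bias_def)
    then have "(\<Sum>b\<in>UNIV. sqrt (pmf ?p (i, b) * pmf ?p' (i, b))) = (\<Sum>b\<in>UNIV. pmf ?p (i, b))"
      by simp
    also have "\<dots> = 1 / t"
      using assms that by (simp add: UNIV_bool pmf_coord_pmf bias add_divide_distrib[symmetric])
    finally show ?thesis
      using False by simp
  qed
  have "1 - \<delta>\<^sup>2 / t = (\<Sum>i<t. (1 - (if i = j then \<delta>\<^sup>2 else 0)) / t)"
    using assms by (simp add: sum_divide_distrib[symmetric] sum_subtractf diff_divide_distrib)
  also have "\<dots> \<le> bhattacharyya ({..<t} \<times> UNIV) ?p ?p'"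
    unfolding bhattacharyya_def sum.cartesian_product' by (intro sum_mono per_coordinate) simp
  finally show ?thesis .
qed

lemma overlap_Pi_sign_pmf_flip:
  fixes \<delta> :: real
  assumes "t \<ge> 1" "j < t" "0 \<le> \<delta>" "\<delta> \<le> 1" "finite S" "card S * \<delta>\<^sup>2 / t \<le> 1/2"
  shows "1/8 \<le> pmf_overlap (PiE_dflt S d (\<lambda>_. {..<t} \<times> UNIV))
                  (Pi_pmf S d (\<lambda>_. sign_pmf t \<delta> \<sigma>))
                  (Pi_pmf S d (\<lambda>_. sign_pmf t \<delta> (\<sigma>(j := \<not> \<sigma> j))))"
proof -
  let ?T = "{..<t} \<times> (UNIV :: bool set)"
  let ?F = "PiE_dflt S d (\<lambda>_. ?T)"
  let ?P = "Pi_pmf S d (\<lambda>_. sign_pmf t \<delta> \<sigma>)" and ?P' = "Pi_pmf S d (\<lambda>_. sign_pmf t \<delta> (\<sigma>(j := \<not> \<sigma> j)))"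
  have "\<delta>\<^sup>2 \<le> 1"
    using assms(3,4) by (simp add: power_le_one)
  then have small: "\<delta>\<^sup>2 / t \<le> 1"
    using assms(1) by (simp add: divide_le_eq_1)
  have "1/2 \<le> 1 + real (card S) * (- (\<delta>\<^sup>2 / t))"
    using assms(6) by simp
  also have "\<dots> \<le> (1 - \<delta>\<^sup>2 / t) ^ card S"
    using Bernoulli_inequality[of "- (\<delta>\<^sup>2 / t)" "card S"] small by simp
  also have "\<dots> \<le> bhattacharyya ?T (sign_pmf t \<delta> \<sigma>) (sign_pmf t \<delta> (\<sigma>(j := \<not> \<sigma> j))) ^ card S"
    using bhattacharyya_sign_pmf_flip[OF assms(1-4)] small by (intro power_mono) auto
  also have "\<dots> = bhattacharyya ?F ?P ?P'"
    using assms(1,5) set_coord_pmf by (intro bhattacharyya_Pi_pmf[symmetric]) auto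
  finally have "(1/2)\<^sup>2 \<le> (bhattacharyya ?F ?P ?P')\<^sup>2"
    by (intro power_mono) auto
  also have "\<dots> \<le> 2 * pmf_overlap ?F ?P ?P'"
    using assms(5) by (intro bhattacharyya_sq_le_overlap finite_PiE_dflt) auto
  finally show ?thesis
    by (simp add: power2_eq_square)
qed

lemma coord_excess_nonneg: "1/4 \<le> v \<Longrightarrow> v \<le> 3/4 \<Longrightarrow> 0 \<le> coord_excess b v"
  by (auto simp: coord_excess_def)

lemma coord_excess_flip: "coord_excess b v + coord_excess (\<not> b) v = 1/2"
  by (auto simp: coord_excess_def)

lemma excess_sign_pmf_flip:
  fixes \<delta> :: real
  assumes "t \<ge> 1" "j < t" "0 \<le> \<delta>" "\<delta> \<le> 1" "finite S" "card S * \<delta>\<^sup>2 / t \<le> 1/2"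
    and G: "\<And>f. G f \<in> C_space t"
  shows "1/16 \<le> measure_pmf.expectation (Pi_pmf S d (\<lambda>_. sign_pmf t \<delta> \<sigma>))
                   (\<lambda>f. coord_excess (\<sigma> j) (G f j)) +
                 measure_pmf.expectation (Pi_pmf S d (\<lambda>_. sign_pmf t \<delta> (\<sigma>(j := \<not> \<sigma> j))))
                   (\<lambda>f. coord_excess (\<not> \<sigma> j) (G f j))"
proof -
  have Gj: "1/4 \<le> G f j" "G f j \<le> 3/4" for f
    using G[of f] assms(2) by (auto simp: cube_def)
  have "set_pmf (Pi_pmf S d (\<lambda>_. sign_pmf t \<delta> \<sigma>')) \<subseteq> PiE_dflt S d (\<lambda>_. {..<t} \<times> UNIV)" for \<sigma>'
    using set_coord_pmf[OF assms(1)] assms(5) by (auto simp: set_Pi_pmf PiE_dflt_def)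
  then have "1/2 * pmf_overlap (PiE_dflt S d (\<lambda>_. {..<t} \<times> UNIV))
                  (Pi_pmf S d (\<lambda>_. sign_pmf t \<delta> \<sigma>))
                  (Pi_pmf S d (\<lambda>_. sign_pmf t \<delta> (\<sigma>(j := \<not> \<sigma> j))))
             \<le> measure_pmf.expectation (Pi_pmf S d (\<lambda>_. sign_pmf t \<delta> \<sigma>))
                   (\<lambda>f. coord_excess (\<sigma> j) (G f j)) +
                 measure_pmf.expectation (Pi_pmf S d (\<lambda>_. sign_pmf t \<delta> (\<sigma>(j := \<not> \<sigma> j))))
                   (\<lambda>f. coord_excess (\<not> \<sigma> j) (G f j))"
    using assms(5) Gj
    by (intro le_cam_two_point finite_PiE_dflt coord_excess_nonneg) (auto simp: coord_excess_flip)
  with overlap_Pi_sign_pmf_flip[OF assms(1-6), where d = d and \<sigma> = \<sigma>] show ?thesis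
    by linarith
qed

lemma excess_sum_sign_vectors:
  fixes \<delta> :: real
  assumes "t \<ge> 1" "j < t" "0 \<le> \<delta>" "\<delta> \<le> 1" "finite S" "card S * \<delta>\<^sup>2 / t \<le> 1/2"
    and G: "\<And>f. G f \<in> C_space t"
  shows "card ({..<t} \<rightarrow>\<^sub>E (UNIV :: bool set)) / 32 \<le>
         (\<Sum>\<sigma>\<in>{..<t} \<rightarrow>\<^sub>E UNIV. measure_pmf.expectation (Pi_pmf S d (\<lambda>_. sign_pmf t \<delta> \<sigma>))
                                     (\<lambda>f. coord_excess (\<sigma> j) (G f j)))"
proof -
  let ?\<Sigma> = "{..<t} \<rightarrow>\<^sub>E (UNIV :: bool set)"
  define E where "E \<sigma> = measure_pmf.expectation (Pi_pmf S d (\<lambda>_. sign_pmf t \<delta> \<sigma>))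
                           (\<lambda>f. coord_excess (\<sigma> j) (G f j))" for \<sigma>
  define flip where "flip \<sigma> = \<sigma>(j := \<not> \<sigma> j)" for \<sigma> :: "nat \<Rightarrow> bool"
  have "bij_betw flip ?\<Sigma> ?\<Sigma>"
    using assms(2) by (intro bij_betwI[where g = flip]) (auto simp: flip_def PiE_def extensional_def)
  then have "sum E ?\<Sigma> = sum (E \<circ> flip) ?\<Sigma>"
    by (rule sum.reindex_bij_betw[symmetric, unfolded comp_def[symmetric]])
  then have "2 * sum E ?\<Sigma> = (\<Sum>\<sigma>\<in>?\<Sigma>. E \<sigma> + E (flip \<sigma>))"
    by (simp add: sum.distrib)
  also have "\<dots> \<ge> (\<Sum>\<sigma>\<in>?\<Sigma>. 1/16)"
    using excess_sign_pmf_flip[OF assms, where d = d] by (intro sum_mono) (simp add: E_def flip_def)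
  finally show ?thesis
    unfolding E_def by simp
qed

abbreviation panels :: "nat \<Rightarrow> nat \<Rightarrow> nat set set" where
  "panels k n \<equiv> {S. S \<subseteq> {..<n} \<and> card S = k}"

lemma finite_panels: "finite (panels k n)"
  by (rule finite_subset[of _ "Pow {..<n}"]) auto

lemma lessThan_in_panels: "k \<le> n \<Longrightarrow> {..<k} \<in> panels k n"
  by auto

type_synonym panel_rule = "(nat \<Rightarrow> real) list \<Rightarrow> (nat \<Rightarrow> real)"

definition panel_decision ::
    "nat \<Rightarrow> panel_rule \<Rightarrow> nat set \<Rightarrow> (nat \<Rightarrow> nat \<times> bool) \<Rightarrow> (nat \<Rightarrow> real)" where
  "panel_decision t q S f = panel_apply q (\<lambda>i. facet_center t (f i)) S"

lemma panel_decision_in_cube: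
  assumes "finite S" "card S = k"
    and "\<forall>ys. length ys = k \<longrightarrow> set ys \<subseteq> X_space t \<longrightarrow> q ys \<in> C_space t"
  shows "panel_decision t q S f \<in> C_space t"
  unfolding panel_decision_def panel_apply_def
  by (rule assms(3)[rule_format]) (auto simp: assms(1,2) facet_center_in_cube)

lemma panel_decision_cong:
  "finite S \<Longrightarrow> (\<forall>l\<in>S. f l = f' l) \<Longrightarrow> panel_decision t q S f = panel_decision t q S f'"
  by (auto simp: panel_decision_def panel_apply_def intro!: arg_cong[where f = q])

definition panel_excess ::
    "nat \<Rightarrow> real \<Rightarrow> panel_rule \<Rightarrow> (nat \<Rightarrow> bool) \<Rightarrow> nat set \<Rightarrow> nat \<Rightarrow> real" where
  "panel_excess t \<delta> q \<sigma> S j =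
     measure_pmf.expectation (Pi_pmf S undefined (\<lambda>_. sign_pmf t \<delta> \<sigma>))
       (\<lambda>f. coord_excess (\<sigma> j) (panel_decision t q S f j))"

lemma expected_cost_panel_decision:
  assumes "t \<ge> 1" "0 \<le> \<delta>" "\<delta> \<le> 1" "finite S" "card S = k"
    and hq: "\<forall>ys. length ys = k \<longrightarrow> set ys \<subseteq> X_space t \<longrightarrow> q ys \<in> C_space t"
  shows "measure_pmf.expectation (Pi_pmf S undefined (\<lambda>_. sign_pmf t \<delta> \<sigma>))
           (\<lambda>f. measure_pmf.expectation (sign_pmf t \<delta> \<sigma>)
                  (\<lambda>y. linf_dist t (panel_decision t q S f) (facet_center t y))) =
         1/2 - \<delta>/4 + \<delta> / t * (\<Sum>j<t. panel_excess t \<delta> q \<sigma> S j)"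
  using assms
  by (simp add: expected_cost_sign_pmf panel_decision_in_cube panel_excess_def
                integrable_measure_pmf_finite finite_set_Pi_pmf finite_set_coord_pmf
                Bochner_Integration.integral_sum)

lemma expected_social_cost_panel_decision:
  fixes \<delta> :: real
  assumes "t \<ge> 1" "0 \<le> \<delta>" "\<delta> \<le> 1" "S \<subseteq> {..<n}" "card S = k"
    and hq: "\<forall>ys. length ys = k \<longrightarrow> set ys \<subseteq> X_space t \<longrightarrow> q ys \<in> C_space t"
  shows "real (n - k) / n * (1/2 - \<delta>/4 + \<delta> / t * (\<Sum>j<t. panel_excess t \<delta> q \<sigma> S j)) \<le>
         measure_pmf.expectation (Pi_pmf {..<n} undefined (\<lambda>_. sign_pmf t \<delta> \<sigma>))
           (\<lambda>x. social_cost t n (\<lambda>i. facet_center t (x i)) (panel_decision t q S x))"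
proof -
  let ?\<mu> = "Pi_pmf {..<n} undefined (\<lambda>_. sign_pmf t \<delta> \<sigma>)"
  let ?L = "\<lambda>i. measure_pmf.expectation ?\<mu>
                 (\<lambda>x. linf_dist t (panel_decision t q S x) (facet_center t (x i)))"
  let ?E = "1/2 - \<delta>/4 + \<delta> / t * (\<Sum>j<t. panel_excess t \<delta> q \<sigma> S j)"
  have finS: "finite S"
    using assms(4) finite_subset by blast
  have fresh: "?L i = ?E" if "i \<in> {..<n} - S" for i
    unfolding expected_cost_panel_decision[OF assms(1-3) finS assms(5) hq, symmetric]
    using that assms(1,4) finS
    by (intro expectation_Pi_pmf_fresh_component[where g = "panel_decision t q S"
               and h = "\<lambda>Q y. linf_dist t Q (facet_center t y)"]
              finite_set_coord_pmf panel_decision_cong) auto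
  have "real (n - k) * ?E = (\<Sum>i\<in>{..<n} - S. ?L i)"
    using fresh assms(4,5) finS by (simp add: card_Diff_subset)
  also have "\<dots> \<le> (\<Sum>i<n. ?L i)"
    using assms(1) by (intro sum_mono2) (auto intro!: Bochner_Integration.integral_nonneg linf_dist_nonneg)
  finally have "real (n - k) * ?E / n \<le> (\<Sum>i<n. ?L i) / n"
    by (simp add: divide_right_mono)
  also have "(\<Sum>i<n. ?L i) / n = measure_pmf.expectation ?\<mu>
           (\<lambda>x. social_cost t n (\<lambda>i. facet_center t (x i)) (panel_decision t q S x))"
    using assms(1)
    by (simp add: social_cost_def integrable_measure_pmf_finite finite_set_Pi_pmf
                  finite_set_coord_pmf Bochner_Integration.integral_sum)
  finally show ?thesis
    by simp
qed

lemma social_opt_le_social_cost: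
  assumes "t \<ge> 1" "Q \<in> C_space t"
  shows "social_opt t n x \<le> social_cost t n x Q"
  unfolding social_opt_def
proof (rule cINF_lower[OF _ assms(2)])
  have "0 \<le> social_cost t n x Q'" for Q'
    using assms(1) by (simp add: social_cost_def sum_nonneg linf_dist_nonneg)
  then show "bdd_below (social_cost t n x ` C_space t)"
    by (intro bdd_belowI[where m = 0]) auto
qed

lemma expected_social_cost_sign_point:
  fixes \<delta> :: real
  assumes "t \<ge> 1" "0 \<le> \<delta>" "\<delta> \<le> 1" "n \<ge> 1"
  shows "measure_pmf.expectation (Pi_pmf {..<n} undefined (\<lambda>_. sign_pmf t \<delta> \<sigma>))
           (\<lambda>x. social_cost t n (\<lambda>i. facet_center t (x i)) (sign_point t \<sigma>)) = 1/2 - \<delta>/4"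
proof -
  let ?\<mu> = "Pi_pmf {..<n} undefined (\<lambda>_. sign_pmf t \<delta> \<sigma>)"
  have "measure_pmf.expectation ?\<mu> (\<lambda>x. linf_dist t (sign_point t \<sigma>) (facet_center t (x i))) =
        1/2 - \<delta>/4" if "i < n" for i
  proof -
    have "measure_pmf.expectation ?\<mu> (\<lambda>x. linf_dist t (sign_point t \<sigma>) (facet_center t (x i))) =
          measure_pmf.expectation (map_pmf (\<lambda>x. x i) ?\<mu>)
            (\<lambda>y. linf_dist t (sign_point t \<sigma>) (facet_center t y))"
      by simp
    also have "map_pmf (\<lambda>x. x i) ?\<mu> = sign_pmf t \<delta> \<sigma>"
      using that by (subst Pi_pmf_component) auto
    finally show ?thesis
      using expected_cost_sign_point[OF assms(1-3)] by simp
  qed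
  then show ?thesis
    using assms
    by (simp add: social_cost_def integrable_measure_pmf_finite finite_set_Pi_pmf
                  finite_set_coord_pmf Bochner_Integration.integral_sum)
qed

lemma mult_affine_average:
  fixes e :: "'a \<Rightarrow> real"
  assumes "finite A" "A \<noteq> {}"
  shows "a * (b + c * (sum e A / card A)) = (\<Sum>x\<in>A. a * (b + c * e x)) / card A"
proof -
  have "(\<Sum>x\<in>A. a * (b + c * e x)) = card A * (a * b) + a * c * sum e A"
    by (simp add: algebra_simps sum.distrib sum_distrib_left)
  moreover have "real (card A) > 0"
    using assms by (simp add: card_gt_0_iff)
  ultimately show ?thesis
    by (simp add: field_simps)
qed

lemma panel_excess_bound:
  fixes \<delta> \<epsilon> :: real
  assumes "t \<ge> 1" "0 \<le> \<delta>" "\<delta> \<le> 1" "0 \<le> \<epsilon>" "1 \<le> k" "k \<le> n"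
    and hq: "\<forall>ys. length ys = k \<longrightarrow> set ys \<subseteq> X_space t \<longrightarrow> q ys \<in> C_space t"
    and approx: "\<forall>x. (\<forall>i<n. x i \<in> X_space t) \<longrightarrow>
          measure_pmf.expectation (uniform_panels k n) (\<lambda>S. social_cost t n x (panel_apply q x S))
          \<le> (1 + \<epsilon>) * social_opt t n x"
  shows "real (n - k) / n * (1/2 - \<delta>/4 + \<delta> / t *
           ((\<Sum>S\<in>panels k n. \<Sum>j<t. panel_excess t \<delta> q \<sigma> S j) / card (panels k n)))
         \<le> (1 + \<epsilon>) * (1/2 - \<delta>/4)"
proof -
  let ?P = "panels k n" and ?\<mu> = "Pi_pmf {..<n} undefined (\<lambda>_. sign_pmf t \<delta> \<sigma>)"
  let ?cost = "\<lambda>x Q. social_cost t n (\<lambda>i. facet_center t (x i)) Q"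
  have P: "finite ?P" "?P \<noteq> {}"
    using finite_panels lessThan_in_panels[OF assms(6)] by blast+
  have integrable: "integrable ?\<mu> f" for f :: "_ \<Rightarrow> real"
    using assms(1) by (simp add: integrable_measure_pmf_finite finite_set_Pi_pmf finite_set_coord_pmf)
  have pointwise: "(\<Sum>S\<in>?P. ?cost x (panel_decision t q S x)) / card ?P \<le>
                   (1 + \<epsilon>) * ?cost x (sign_point t \<sigma>)" for x
  proof -
    have "(\<Sum>S\<in>?P. ?cost x (panel_decision t q S x)) / card ?P =
          measure_pmf.expectation (uniform_panels k n)
            (\<lambda>S. ?cost x (panel_apply q (\<lambda>i. facet_center t (x i)) S))"
      using P by (simp add: uniform_panels_def integral_pmf_of_set panel_decision_def)
    also have "\<dots> \<le> (1 + \<epsilon>) * social_opt t n (\<lambda>i. facet_center t (x i))"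
      by (rule approx[rule_format]) (simp add: facet_center_in_cube)
    also have "\<dots> \<le> (1 + \<epsilon>) * ?cost x (sign_point t \<sigma>)"
      using assms(1,4) sign_point_in_cube by (intro mult_left_mono social_opt_le_social_cost) auto
    finally show ?thesis .
  qed
  have "real (n - k) / n * (1/2 - \<delta>/4 + \<delta> / t *
           ((\<Sum>S\<in>?P. \<Sum>j<t. panel_excess t \<delta> q \<sigma> S j) / card ?P)) =
        (\<Sum>S\<in>?P. real (n - k) / n * (1/2 - \<delta>/4 + \<delta> / t * (\<Sum>j<t. panel_excess t \<delta> q \<sigma> S j))) / card ?P"
    by (rule mult_affine_average[OF P])
  also have "\<dots> \<le> (\<Sum>S\<in>?P. measure_pmf.expectation ?\<mu> (\<lambda>x. ?cost x (panel_decision t q S x))) / card ?P"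
    using assms(1-3) hq
    by (intro divide_right_mono sum_mono expected_social_cost_panel_decision) auto
  also have "\<dots> = measure_pmf.expectation ?\<mu>
                    (\<lambda>x. (\<Sum>S\<in>?P. ?cost x (panel_decision t q S x)) / card ?P)"
    by (simp add: integrable Bochner_Integration.integral_sum)
  also have "\<dots> \<le> measure_pmf.expectation ?\<mu> (\<lambda>x. (1 + \<epsilon>) * ?cost x (sign_point t \<sigma>))"
    by (intro integral_mono integrable pointwise)
  also have "\<dots> = (1 + \<epsilon>) * (1/2 - \<delta>/4)"
    using expected_social_cost_sign_point[OF assms(1-3)] assms(5,6) by simp
  finally show ?thesis .
qed

lemma exists_sign_vector_large_panel_excess:
  fixes \<delta> :: real
  assumes "t \<ge> 1" "0 \<le> \<delta>" "\<delta> \<le> 1" "k \<le> n" "k * \<delta>\<^sup>2 / t \<le> 1/2"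
    and hq: "\<forall>ys. length ys = k \<longrightarrow> set ys \<subseteq> X_space t \<longrightarrow> q ys \<in> C_space t"
  shows "\<exists>\<sigma>. t / 32 \<le> (\<Sum>S\<in>panels k n. \<Sum>j<t. panel_excess t \<delta> q \<sigma> S j) / card (panels k n)"
proof (rule ccontr)
  let ?\<Sigma> = "{..<t} \<rightarrow>\<^sub>E (UNIV :: bool set)" and ?P = "panels k n"
  let ?avg = "\<lambda>\<sigma>. (\<Sum>S\<in>?P. \<Sum>j<t. panel_excess t \<delta> q \<sigma> S j) / card ?P"
  assume "\<not> ?thesis"
  then have "?avg \<sigma> < t / 32" for \<sigma>
    by (simp add: not_le)
  moreover have \<Sigma>: "0 < card ?\<Sigma>"
    by (simp add: card_gt_0_iff finite_PiE PiE_eq_empty_iff)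
  ultimately have "(\<Sum>\<sigma>\<in>?\<Sigma>. ?avg \<sigma>) < card ?\<Sigma> * (t / 32)"
    by (intro sum_bounded_above_strict)
  moreover have "card ?\<Sigma> * (t / 32) \<le> (\<Sum>\<sigma>\<in>?\<Sigma>. ?avg \<sigma>)"
  proof -
    have P: "finite ?P" "?P \<noteq> {}"
      using finite_panels lessThan_in_panels[OF assms(4)] by blast+
    have "card ?\<Sigma> / 32 \<le> (\<Sum>\<sigma>\<in>?\<Sigma>. panel_excess t \<delta> q \<sigma> S j)" if "S \<in> ?P" "j < t" for S j
      unfolding panel_excess_def
      using that assms(1-3,5) finite_subset[of S "{..<n}"]
      by (intro excess_sum_sign_vectors panel_decision_in_cube[OF _ _ hq]) auto
    then have "(\<Sum>S\<in>?P. \<Sum>j<t. card ?\<Sigma> / 32) \<le> (\<Sum>S\<in>?P. \<Sum>j<t. \<Sum>\<sigma>\<in>?\<Sigma>. panel_excess t \<delta> q \<sigma> S j)"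
      by (intro sum_mono) auto
    also have "\<dots> = (\<Sum>\<sigma>\<in>?\<Sigma>. \<Sum>S\<in>?P. \<Sum>j<t. panel_excess t \<delta> q \<sigma> S j)"
      by (simp add: sum.swap[of _ ?\<Sigma>])
    finally have "card ?P * (t * (card ?\<Sigma> / 32)) \<le> (\<Sum>\<sigma>\<in>?\<Sigma>. \<Sum>S\<in>?P. \<Sum>j<t. panel_excess t \<delta> q \<sigma> S j)"
      by simp
    then show ?thesis
      using P by (simp add: sum_divide_distrib[symmetric] field_simps card_gt_0_iff)
  qed
  ultimately show False
    by linarith
qed

lemma exists_population_mostly_outside_panel:
  fixes \<epsilon> :: real
  assumes "0 < \<epsilon>" "1 \<le> k"
  shows "\<exists>n. k \<le> n \<and> 1 - \<epsilon>/4 \<le> real (n - k) / n"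
proof -
  define m where "m = nat \<lceil>4 / \<epsilon>\<rceil>"
  have m: "4 / \<epsilon> \<le> real m"
    unfolding m_def by linarith
  then have "0 < real m"
    using assms(1) by (smt (verit) divide_pos_pos)
  then have "real (k * m - k) / (k * m) = 1 - 1 / m"
    using assms(2) by (simp add: of_nat_diff field_simps)
  moreover have "1 / m \<le> \<epsilon> / 4"
    using m assms(1) \<open>0 < real m\<close> by (simp add: field_simps)
  ultimately show ?thesis
    using \<open>0 < real m\<close> by (intro exI[of _ "k * m"]) auto
qed

lemma panel_size_lower_bound:
  fixes \<epsilon> :: real
  assumes "t \<ge> 1" "k \<ge> 1" "0 < \<epsilon>" "\<epsilon> < 1/64"
    and hq: "\<forall>ys. length ys = k \<longrightarrow> set ys \<subseteq> X_space t \<longrightarrow> q ys \<in> C_space t"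
    and approx: "\<forall>n x. n \<ge> k \<longrightarrow> (\<forall>i<n. x i \<in> X_space t) \<longrightarrow>
          measure_pmf.expectation (uniform_panels k n) (\<lambda>S. social_cost t n x (panel_apply q x S))
          \<le> (1 + \<epsilon>) * social_opt t n x"
  shows "real t \<le> 2048 * real k * \<epsilon>\<^sup>2"
proof (rule ccontr)
  assume small_panel: "\<not> real t \<le> 2048 * real k * \<epsilon>\<^sup>2"
  define \<delta> where "\<delta> = 32 * \<epsilon>"
  have \<delta>: "0 \<le> \<delta>" "\<delta> \<le> 1" "k * \<delta>\<^sup>2 / t \<le> 1/2"
    using assms(1,3,4) small_panel by (auto simp: \<delta>_def power_mult_distrib field_simps)
  obtain n where n: "k \<le> n" "1 - \<epsilon>/4 \<le> real (n - k) / n"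
    using exists_population_mostly_outside_panel[OF assms(3,2)] by blast
  obtain \<sigma> where \<sigma>: "t / 32 \<le> (\<Sum>S\<in>panels k n. \<Sum>j<t. panel_excess t \<delta> q \<sigma> S j) / card (panels k n)"
    using exists_sign_vector_large_panel_excess[OF assms(1) \<delta>(1,2) n(1) \<delta>(3) hq] by blast
  define \<alpha> where "\<alpha> = real (n - k) / n"
  define excess where
    "excess = \<delta> / t * ((\<Sum>S\<in>panels k n. \<Sum>j<t. panel_excess t \<delta> q \<sigma> S j) / card (panels k n))"
  have \<alpha>: "1 - \<epsilon>/4 \<le> \<alpha>"
    unfolding \<alpha>_def by (rule n(2))
  have risk: "\<alpha> * (1/2 - \<delta>/4 + excess) \<le> (1 + \<epsilon>) * (1/2 - \<delta>/4)"
    unfolding \<alpha>_def excess_def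
    using assms(1-3) \<delta>(1,2) n(1) hq approx by (intro panel_excess_bound) auto
  have "\<epsilon> \<le> excess"
    using mult_left_mono[OF \<sigma>, of "\<delta> / t"] assms(1) \<delta>(1) by (simp add: excess_def \<delta>_def)
  have "(1 - \<epsilon>/4) * (1/2 - 7 * \<epsilon>) \<le> \<alpha> * (1/2 - 7 * \<epsilon>)"
    using \<alpha> assms(4) by (intro mult_right_mono) auto
  also have "\<dots> \<le> \<alpha> * (1/2 - \<delta>/4 + excess)"
    using \<alpha> assms(4) \<open>\<epsilon> \<le> excess\<close> by (intro mult_left_mono) (auto simp: \<delta>_def)
  also have "\<dots> \<le> (1 + \<epsilon>) * (1/2 - 8 * \<epsilon>)"
    using risk by (simp add: \<delta>_def)
  finally have "3/8 * \<epsilon> + 39/4 * \<epsilon>\<^sup>2 \<le> 0"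
    by (simp add: algebra_simps power2_eq_square)
  moreover have "0 < 3/8 * \<epsilon> + 39/4 * \<epsilon>\<^sup>2"
    using assms(3) by (intro add_pos_nonneg) auto
  ultimately show False
    by linarith
qed

theorem theorem4p12:
  shows "\<exists>c::real. c > 0 \<and>
    (\<forall>(t::nat) (k::nat) (\<epsilon>::real) (q :: (nat \<Rightarrow> real) list \<Rightarrow> (nat \<Rightarrow> real)).
       t \<ge> 1 \<longrightarrow> k \<ge> 1 \<longrightarrow> 0 < \<epsilon> \<longrightarrow> \<epsilon> < 1/64 \<longrightarrow>
       (\<forall>ys. length ys = k \<longrightarrow> set ys \<subseteq> X_space t \<longrightarrow> q ys \<in> C_space t) \<longrightarrow>
       (\<forall>(n::nat) (x :: nat \<Rightarrow> nat \<Rightarrow> real). n \<ge> k \<longrightarrow> (\<forall>i<n. x i \<in> X_space t) \<longrightarrow>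
          measure_pmf.expectation (uniform_panels k n)
             (\<lambda>S. social_cost t n x (panel_apply q x S))
          \<le> (1 + \<epsilon>) * social_opt t n x) \<longrightarrow>
       real k \<ge> c * real t / \<epsilon>\<^sup>2)"
proof (intro exI[of _ "1/2048"] conjI allI impI)
  fix t k :: nat and \<epsilon> :: real and q :: "(nat \<Rightarrow> real) list \<Rightarrow> (nat \<Rightarrow> real)"
  assume "t \<ge> 1" "k \<ge> 1" "0 < \<epsilon>" "\<epsilon> < 1/64"
    and "\<forall>ys. length ys = k \<longrightarrow> set ys \<subseteq> X_space t \<longrightarrow> q ys \<in> C_space t"
    and "\<forall>(n::nat) (x :: nat \<Rightarrow> nat \<Rightarrow> real). n \<ge> k \<longrightarrow> (\<forall>i<n. x i \<in> X_space t) \<longrightarrow>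
          measure_pmf.expectation (uniform_panels k n)
             (\<lambda>S. social_cost t n x (panel_apply q x S))
          \<le> (1 + \<epsilon>) * social_opt t n x"
  then have "real t \<le> 2048 * real k * \<epsilon>\<^sup>2"
    by (rule panel_size_lower_bound)
  then show "real k \<ge> 1/2048 * real t / \<epsilon>\<^sup>2"
    using \<open>0 < \<epsilon>\<close> by (simp add: field_simps)
qed simp

end
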